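(* Every deterministic max-finding algorithm with error $k$ requires $\Omega(n^{1+1/(2^k-1)})$ comparisons on $n$ elements (in the worst case).
   Context: Model of imprecise comparisons: there are $n$ elements, each with a fixed unknown real value; we identify an element with its value. Asked to compare $x_i$ and $x_j$, the comparator answers either "$x_i \ge x_j$" or "$x_j \ge x_i$". If $|x_i-x_j|>1$ the answer is correct; if $|x_i-x_j|\le 1$ the answer is arbitrary (possibly adversarial and adaptive). A max-finding algorithm has error $k$ if for every input and every consistent comparator behaviour its output $x$ satisfies $x \ge x^*-k$, where $x^*$ is the maximum value of an input element. *)

theory Defs
  imports Complex_Main
begin

text \<open>A deterministic (adaptive) comparison algorithm on elements indexed 0..n-1 is a
decision tree. Node Cmp i j T F asks the comparator about x_i and x_j; the answer
"x_i \<ge> x_j" leads to T, the answer "x_j \<ge> x_i" leads to F.\<close>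

datatype alg = Leaf nat | Cmp nat nat alg alg

fun wf_alg :: "nat \<Rightarrow> alg \<Rightarrow> bool" where
  "wf_alg n (Leaf m) = (m < n)"
| "wf_alg n (Cmp i j t f) = (i < n \<and> j < n \<and> wf_alg n t \<and> wf_alg n f)"

definition ans_ok :: "(nat \<Rightarrow> real) \<Rightarrow> nat \<Rightarrow> nat \<Rightarrow> bool \<Rightarrow> bool" where
  "ans_ok x i j b = (\<bar>x i - x j\<bar> \<le> 1 \<or> (if b then x i \<ge> x j else x j \<ge> x i))"

text \<open>run x A m c: for input values x, some consistent (possibly adversarial, adaptive)
comparator behaviour drives A to output element m after exactly c comparisons.\<close>

inductive run :: "(nat \<Rightarrow> real) \<Rightarrow> alg \<Rightarrow> nat \<Rightarrow> nat \<Rightarrow> bool" where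
  run_leaf: "run x (Leaf m) m 0"
| run_true: "ans_ok x i j True \<Longrightarrow> run x t m c \<Longrightarrow> run x (Cmp i j t f) m (Suc c)"
| run_false: "ans_ok x i j False \<Longrightarrow> run x f m c \<Longrightarrow> run x (Cmp i j t f) m (Suc c)"

definition max_error :: "nat \<Rightarrow> real \<Rightarrow> alg \<Rightarrow> bool" where
  "max_error n k A = (\<forall>x m c. run x A m c \<longrightarrow> x m \<ge> Max (x ` {..<n}) - k)"

end

theory Submission
  imports Defs
begin

text \<open>
The adversary answers every comparison in favour of the element that has so far taken part
in fewer comparisons. Let m be the output and call v reached from m within j steps if a
chain of at most j recorded wins leads from m to v. Giving v the value "number of levels
j \<le> k at which v is not yet reached" is consistent with all answers and gives m value 0 and
any element not reached within k steps value k + 1, so an algorithm with error k must reach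
all n elements within k steps.

Since every winner had no more comparisons than its victim, an element beats at most t
victims that end up with at most t comparisons. Splitting the next level at a degree
threshold shows that a level of size N needs a previous level of size at least
N^2 / (6 (2L + N)), where L is the number of comparisons; iterating k times gives
n^(2^k) \<le> (6 (2L + n))^(2^k - 1), i.e. L = \<Omega>(n^(1 + 1/(2^k - 1))).
\<close>

definition degree :: "(nat \<times> nat) list \<Rightarrow> nat \<Rightarrow> nat" where
  "degree h v = length (filter (\<lambda>p. fst p = v) h) + length (filter (\<lambda>p. snd p = v) h)"

lemma degree_Nil [simp]: "degree [] v = 0"
  by (simp add: degree_def)

lemma degree_Cons [simp]:
  "degree ((a, b) # h) v = degree h v + (if a = v then 1 else 0) + (if b = v then 1 else 0)"
  by (simp add: degree_def)

lemma degree_le_degree_Cons: "degree h v \<le> degree (p # h) v"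
  by (cases p) simp

fun adversary :: "alg \<Rightarrow> (nat \<times> nat) list \<Rightarrow> nat \<times> (nat \<times> nat) list" where
  "adversary (Leaf m) h = (m, h)"
| "adversary (Cmp i j t f) h =
     (if degree h i \<le> degree h j then adversary t ((i, j) # h) else adversary f ((j, i) # h))"

fun balanced :: "(nat \<times> nat) list \<Rightarrow> bool" where
  "balanced [] = True"
| "balanced ((a, b) # h) = (balanced h \<and> degree h a \<le> degree h b)"

lemma balanced_adversary: "balanced h \<Longrightarrow> balanced (snd (adversary A h))"
  by (induction A h rule: adversary.induct) auto

lemma adversary_extends: "\<exists>h'. snd (adversary A h) = h' @ h"
  by (induction A h rule: adversary.induct) (force simp: Cons_eq_append_conv[symmetric])+

lemma run_adversary:
  assumes "\<And>a b. (a, b) \<in> set (snd (adversary A h)) \<Longrightarrow> x b \<le> x a + 1"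
  shows "run x A (fst (adversary A h)) (length (snd (adversary A h)) - length h)"
  using assms
proof (induction A h rule: adversary.induct)
  case (1 m h)
  then show ?case by (simp add: run_leaf)
next
  case (2 i j t f h)
  show ?case
  proof (cases "degree h i \<le> degree h j")
    case True
    obtain h' where "snd (adversary t ((i, j) # h)) = h' @ (i, j) # h"
      using adversary_extends by blast
    moreover from this True "2.prems" have "ans_ok x i j True"
      by (fastforce simp: ans_ok_def)
    ultimately show ?thesis
      using True "2.IH"(1) "2.prems" run_true by fastforce
  next
    case False
    obtain h' where "snd (adversary f ((j, i) # h)) = h' @ (j, i) # h"
      using adversary_extends by blast
    moreover from this False "2.prems" have "ans_ok x i j False"
      by (fastforce simp: ans_ok_def)
    ultimately show ?thesis
      using False "2.IH"(2) "2.prems" run_false by fastforce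
  qed
qed

definition beaten :: "(nat \<times> nat) list \<Rightarrow> nat \<Rightarrow> nat set" where
  "beaten h w = {v. (w, v) \<in> set h}"

lemma finite_beaten [simp]: "finite (beaten h w)"
proof -
  have "beaten h w \<subseteq> snd ` set h"
    by (force simp: beaten_def)
  then show ?thesis
    using finite_subset by blast
qed

lemma card_beaten_le_degree: "card (beaten h w) \<le> degree h w"
proof -
  have "beaten h w = snd ` set (filter (\<lambda>p. fst p = w) h)"
    by (force simp: beaten_def)
  then have "card (beaten h w) \<le> length (filter (\<lambda>p. fst p = w) h)"
    by (metis card_image_le card_length finite_set le_trans)
  then show ?thesis
    by (simp add: degree_def)
qed

fun reach :: "(nat \<times> nat) list \<Rightarrow> nat \<Rightarrow> nat \<Rightarrow> nat set" where
  "reach h m 0 = {m}"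
| "reach h m (Suc j) = reach h m j \<union> (\<Union>u\<in>reach h m j. beaten h u)"

lemma finite_reach [simp]: "finite (reach h m j)"
  by (induction j) auto

lemma reach_mono: "i \<le> j \<Longrightarrow> reach h m i \<subseteq> reach h m j"
  by (induction j) (auto simp: le_Suc_eq)

lemma start_in_reach: "m \<in> reach h m j"
  using reach_mono[of 0 j h m] by auto

lemma reach_Suc_beaten: "(a, b) \<in> set h \<Longrightarrow> a \<in> reach h m j \<Longrightarrow> b \<in> reach h m (Suc j)"
  by (auto simp: beaten_def)

text \<open>A loser is reached at most one level after its winner, so these values never
  contradict a recorded answer by more than 1.\<close>

definition adversary_input :: "(nat \<times> nat) list \<Rightarrow> nat \<Rightarrow> nat \<Rightarrow> nat \<Rightarrow> real" where
  "adversary_input h m k v = real (card {j \<in> {..k}. v \<notin> reach h m j})"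

lemma adversary_input_beaten:
  assumes "(a, b) \<in> set h"
  shows "adversary_input h m k b \<le> adversary_input h m k a + 1"
proof -
  let ?missed = "\<lambda>v. {j \<in> {..k}. v \<notin> reach h m j}"
  have "?missed b \<subseteq> insert 0 (Suc ` ?missed a)"
  proof
    fix j
    assume j: "j \<in> ?missed b"
    show "j \<in> insert 0 (Suc ` ?missed a)"
    proof (cases j)
      case (Suc i)
      then have "a \<notin> reach h m i"
        using j reach_Suc_beaten[OF assms] by auto
      then show ?thesis
        using Suc j by auto
    qed simp
  qed
  then have "card (?missed b) \<le> card (insert 0 (Suc ` ?missed a))"
    by (intro card_mono) auto
  also have "\<dots> \<le> Suc (card (Suc ` ?missed a))"
    by (simp add: card_insert_le_m1)
  also have "\<dots> \<le> Suc (card (?missed a))"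
    by (simp add: card_image_le)
  finally show ?thesis
    unfolding adversary_input_def by simp
qed

lemma adversary_input_start: "adversary_input h m k m = 0"
  unfolding adversary_input_def using start_in_reach by simp

lemma adversary_input_unreached:
  assumes "y \<notin> reach h m k"
  shows "adversary_input h m k y = real k + 1"
proof -
  have "{j \<in> {..k}. y \<notin> reach h m j} = {..k}"
    using assms reach_mono by blast
  then show ?thesis
    unfolding adversary_input_def by simp
qed

lemma run_adversary_input:
  assumes "adversary A [] = (m, H)"
  shows "run (adversary_input H m k) A m (length H)"
  using run_adversary[of A "[]" "adversary_input H m k"] assms adversary_input_beaten by simp

lemma reach_adversary_covers:
  assumes "max_error n (real k) A" "adversary A [] = (m, H)"
  shows "{..<n} \<subseteq> reach H m k"
proof
  fix y
  assume y: "y \<in> {..<n}"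
  let ?x = "adversary_input H m k"
  show "y \<in> reach H m k"
  proof (rule ccontr)
    assume "y \<notin> reach H m k"
    have "Max (?x ` {..<n}) - real k \<le> ?x m"
      using assms run_adversary_input unfolding max_error_def by blast
    moreover have "?x y \<le> Max (?x ` {..<n})"
      using y by simp
    ultimately show False
      using adversary_input_start adversary_input_unreached[OF \<open>y \<notin> reach H m k\<close>] by simp
  qed
qed

text \<open>When w beat v, v had at least as many comparisons as w, which had already beaten
  all earlier victims of w; so a victim ending with at most t comparisons was at most the
  t-th one.\<close>

lemma card_beaten_degree_le:
  "balanced h \<Longrightarrow> card {v \<in> beaten h w. degree h v \<le> t} \<le> t"
proof (induction h arbitrary: t rule: balanced.induct)
  case 1
  then show ?case
    by (simp add: beaten_def)
next
  case (2 a b h)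
  let ?h = "(a, b) # h"
  have IH: "card {v \<in> beaten h w. degree h v \<le> t} \<le> t"
    using 2 by simp
  show ?case
  proof (cases "a = w \<and> b \<notin> beaten h w \<and> degree ?h b \<le> t")
    case False
    have sub: "{v \<in> beaten ?h w. degree ?h v \<le> t} \<subseteq> {v \<in> beaten h w. degree h v \<le> t}"
    proof
      fix v
      assume v: "v \<in> {v \<in> beaten ?h w. degree ?h v \<le> t}"
      then have "v \<in> beaten h w"
        using False by (auto simp: beaten_def)
      moreover have "degree h v \<le> t"
        using v degree_le_degree_Cons[of h v "(a, b)"] by simp
      ultimately show "v \<in> {v \<in> beaten h w. degree h v \<le> t}"
        by simp
    qed
    show ?thesis
      by (rule le_trans[OF card_mono[OF _ sub] IH]) simp
  next
    case True
    have "{v \<in> beaten ?h w. degree ?h v \<le> t} \<subseteq> insert b (beaten h w)"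
      by (auto simp: beaten_def)
    then have "card {v \<in> beaten ?h w. degree ?h v \<le> t} \<le> Suc (card (beaten h w))"
      using True by (metis card_insert_disjoint card_mono finite_beaten finite_insert)
    also have "\<dots> \<le> Suc (degree h a)"
      using card_beaten_le_degree True by simp
    also have "\<dots> \<le> t"
      using True "2.prems" by auto
    finally show ?thesis .
  qed
qed

lemma card_beaten_degree_less:
  assumes "balanced h" "s > 0"
  shows "real (card {v \<in> beaten h w. real (degree h v) < s}) \<le> s"
proof -
  define t where "t = nat \<lceil>s\<rceil> - 1"
  have "d \<le> t" if "real d < s" for d
  proof -
    have "int d < \<lceil>s\<rceil>"
      using that by (simp add: less_ceiling_iff)
    then show ?thesis
      unfolding t_def by linarith
  qed
  then have sub: "{v \<in> beaten h w. real (degree h v) < s} \<subseteq> {v \<in> beaten h w. degree h v \<le> t}"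
    by blast
  have "card {v \<in> beaten h w. real (degree h v) < s} \<le> t"
    by (rule le_trans[OF card_mono[OF _ sub] card_beaten_degree_le[OF assms(1)]]) simp
  moreover have "real t \<le> s"
    unfolding t_def using assms(2) by linarith
  ultimately show ?thesis
    by linarith
qed

lemma sum_degree_le: "finite V \<Longrightarrow> (\<Sum>v\<in>V. degree h v) \<le> 2 * length h"
proof (induction h)
  case Nil
  then show ?case by simp
next
  case (Cons p h)
  obtain a b where p: "p = (a, b)"
    by fastforce
  have "(\<Sum>v\<in>V. degree (p # h) v) = (\<Sum>v\<in>V. degree h v)
      + (\<Sum>v\<in>V. if a = v then 1 else 0) + (\<Sum>v\<in>V. if b = v then 1 else 0)"
    by (simp add: p sum.distrib)
  also have "\<dots> \<le> 2 * length h + 1 + 1"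
    using Cons by (intro add_mono) (simp_all add: sum.delta)
  finally show ?case
    by simp
qed

lemma card_beaten_closure_le:
  assumes "balanced h" "finite S" "s > 0"
  shows "real (card (S \<union> (\<Union>u\<in>S. beaten h u)))
           \<le> real (card S) * (1 + s) + 2 * real (length h) / s"
proof -
  define T where "T = S \<union> (\<Union>u\<in>S. beaten h u)"
  define light where "light u = {v \<in> beaten h u. real (degree h v) < s}" for u
  define heavy where "heavy = {v \<in> T. s \<le> real (degree h v)}"
  have fin: "finite T" "finite heavy"
    unfolding T_def heavy_def using assms(2) by simp_all
  have "card T \<le> card ((S \<union> (\<Union>u\<in>S. light u)) \<union> heavy)"
    by (rule card_mono) (use assms(2) fin in \<open>auto simp: T_def light_def heavy_def\<close>)
  also have "\<dots> \<le> card S + card (\<Union>u\<in>S. light u) + card heavy"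
    by (meson add_right_mono card_Un_le le_trans)
  also have "\<dots> \<le> card S + (\<Sum>u\<in>S. card (light u)) + card heavy"
    by (intro add_mono le_refl card_UN_le assms(2))
  finally have "real (card T) \<le> real (card S) + (\<Sum>u\<in>S. real (card (light u))) + real (card heavy)"
    by (metis of_nat_add of_nat_mono of_nat_sum)
  moreover have "(\<Sum>u\<in>S. real (card (light u))) \<le> real (card S) * s"
    unfolding light_def by (rule sum_bounded_above) (rule card_beaten_degree_less[OF assms(1,3)])
  moreover have "real (card heavy) * s \<le> 2 * real (length h)"
  proof -
    have "real (card heavy) * s \<le> (\<Sum>v\<in>heavy. real (degree h v))"
      by (rule sum_bounded_below) (simp add: heavy_def)
    also have "\<dots> \<le> 2 * real (length h)"
      by (metis fin(2) of_nat_le_iff of_nat_mult of_nat_numeral of_nat_sum sum_degree_le)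
    finally show ?thesis .
  qed
  then have "real (card heavy) \<le> 2 * real (length h) / s"
    using assms(3) by (simp add: field_simps)
  ultimately show ?thesis
    unfolding T_def[symmetric] by (simp add: distrib_left)
qed

lemma card_reach_Suc:
  assumes "balanced h" "N > 0" "N \<le> real (card (reach h m (Suc j)))"
  shows "N\<^sup>2 \<le> 6 * (2 * real (length h) + N) * real (card (reach h m j))"
proof -
  define P where "P = 2 * real (length h) + N"
  define M where "M = real (card (reach h m j))"
  have P: "N \<le> P" "2 * real (length h) \<le> P"
    unfolding P_def using assms(2) by auto
  txt \<open>The threshold 2P/N keeps the high-degree part of the next level below N/2.\<close>
  have "N \<le> M * (1 + 2 * P / N) + 2 * real (length h) / (2 * P / N)"
    using card_beaten_closure_le[OF assms(1) finite_reach[of h m j], of "2 * P / N"] assms(2,3) P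
    unfolding M_def by simp
  also have "\<dots> \<le> M * (3 * P / N) + N / 2"
  proof (intro add_mono mult_left_mono)
    show "1 + 2 * P / N \<le> 3 * P / N"
      using P assms(2) by (simp add: field_simps)
    show "2 * real (length h) / (2 * P / N) \<le> N / 2"
      using P assms(2) by (simp add: field_simps mult_right_mono)
  qed (simp add: M_def)
  finally have "N / 2 \<le> M * (3 * P / N)"
    by simp
  then show ?thesis
    using assms(2) unfolding P_def[symmetric] M_def[symmetric]
    by (simp add: field_simps power2_eq_square)
qed

lemma card_reach_power_le:
  assumes "balanced h" "N > 0" "N \<le> real (card (reach h m j))"
  shows "N ^ 2 ^ j \<le> (6 * (2 * real (length h) + N)) ^ (2 ^ j - 1)"
  using assms(2,3)
proof (induction j arbitrary: N)
  case 0
  then show ?case by simp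
next
  case (Suc j)
  define P where "P = 6 * (2 * real (length h) + N)"
  define N' where "N' = N\<^sup>2 / P"
  have P: "0 < P" "6 * N \<le> P"
    unfolding P_def using Suc.prems by auto
  have N': "0 < N'" "N' \<le> N"
    unfolding N'_def using P Suc.prems by (auto simp: field_simps power2_eq_square)
  have "N' \<le> real (card (reach h m j))"
    using card_reach_Suc[OF assms(1) Suc.prems] P unfolding N'_def P_def
    by (simp add: field_simps)
  then have "N' ^ 2 ^ j \<le> (6 * (2 * real (length h) + N')) ^ (2 ^ j - 1)"
    using Suc.IH N'(1) by blast
  also have "\<dots> \<le> P ^ (2 ^ j - 1)"
    unfolding P_def using N' by (intro power_mono) auto
  finally have IH: "N' ^ 2 ^ j \<le> P ^ (2 ^ j - 1)" .
  have "N ^ 2 ^ Suc j = P ^ 2 ^ j * N' ^ 2 ^ j"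
    unfolding N'_def using P by (simp add: power_mult power_divide)
  also have "\<dots> \<le> P ^ 2 ^ j * P ^ (2 ^ j - 1)"
    using IH P by (intro mult_left_mono) auto
  also have "\<dots> = P ^ (2 ^ j + (2 ^ j - 1))"
    by (rule power_add[symmetric])
  also have "2 ^ j + (2 ^ j - 1) = 2 ^ Suc j - (1::nat)"
    using one_le_power[of 2 j] by simp
  finally show ?case
    unfolding P_def .
qed

lemma lower_bound_of_power_le:
  fixes n L :: real and K :: nat
  assumes "2 \<le> K" "12 ^ (K - 1) \<le> n" "0 \<le> L"
    and "n ^ K \<le> (6 * (2 * L + n)) ^ (K - 1)"
  shows "n powr (1 + 1 / (real K - 1)) / 24 \<le> L"
proof -
  define a where "a = 1 / (real K - 1)"
  have a: "0 < a" "real K * a = 1 + a"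
    unfolding a_def using assms(1) by (auto simp: field_simps)
  have n: "0 < n"
    using assms(2) by (smt (verit) zero_less_power)
  have root: "(y ^ (K - 1)) powr a = y" if "0 < y" for y :: real
    using that assms(1) by (simp add: a_def powr_realpow[symmetric] powr_powr of_nat_diff)
  have "n powr (1 + a) = (n ^ K) powr a"
    using n a by (simp add: powr_realpow[symmetric] powr_powr)
  also have "\<dots> \<le> ((6 * (2 * L + n)) ^ (K - 1)) powr a"
    using assms(4) a n by (intro powr_mono2) auto
  also have "\<dots> = 6 * (2 * L + n)"
    using n assms(3) by (intro root) simp
  finally have upper: "n powr (1 + a) \<le> 12 * L + 6 * n"
    by simp
  have "12 = (12 ^ (K - 1)) powr a"
    using root[of 12] by simp
  also have "\<dots> \<le> n powr a"
    using assms(2) a by (intro powr_mono2) auto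
  finally have "12 * n \<le> n powr (1 + a)"
    using n by (simp add: powr_add)
  with upper show ?thesis
    unfolding a_def by linarith
qed

theorem mainTheorem16:
  fixes k :: nat
  assumes "k \<ge> 1"
  shows "\<exists>C > 0. \<exists>N. \<forall>n \<ge> N. \<forall>A. wf_alg n A \<and> max_error n (real k) A \<longrightarrow>
           (\<exists>x m c. run x A m c \<and>
              real c \<ge> C * real n powr (1 + 1 / (2 ^ k - 1)))"
proof (intro exI[of _ "1/24"] conjI exI[of _ "12 ^ (2 ^ k - 1) :: nat"] allI impI)
  show "(0::real) < 1/24"
    by simp
  fix n A
  assume n: "12 ^ (2 ^ k - 1) \<le> n" and A: "wf_alg n A \<and> max_error n (real k) A"
  obtain m H where adv: "adversary A [] = (m, H)"
    by fastforce
  have K: "2 \<le> (2::nat) ^ k"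
    using assms by (metis power_increasing power_one_right one_le_numeral)
  have n_real: "12 ^ (2 ^ k - 1) \<le> real n"
    using n by (metis of_nat_le_iff of_nat_numeral of_nat_power)
  have "real n \<le> real (card (reach H m k))"
    using card_mono[OF finite_reach reach_adversary_covers[OF _ adv]] A by simp
  moreover have "balanced H"
    using balanced_adversary[of "[]" A] adv by simp
  moreover have "0 < real n"
    using n_real by (smt (verit) zero_less_power)
  ultimately have "real n ^ 2 ^ k \<le> (6 * (2 * real (length H) + real n)) ^ (2 ^ k - 1)"
    using card_reach_power_le by blast
  then have "real n powr (1 + 1 / (2 ^ k - 1)) / 24 \<le> real (length H)"
    using lower_bound_of_power_le[OF K _ of_nat_0_le_iff] n_real by simp
  then show "\<exists>x m c. run x A m c \<and> 1/24 * real n powr (1 + 1 / (2 ^ k - 1)) \<le> real c"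
    using run_adversary_input[OF adv] by auto
qed

end
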